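(* Suppose we are given two triples of real numbers $(x,y,z)$ and $(\tilde x,\tilde y,\tilde z)$ satisfying: (i) $x,\tilde x\in(-1,0)$ and $p_{0,-1}(\tilde x)>p_{0,-1}(x)$; (ii) $y\in(0,-x)$, $\tilde y\in(0,-\tilde x)$ and $p_{\tilde x,1}(\tilde y)\ge p_{x,1}(y)+\big(p_{0,-1}(\tilde x)-p_{0,-1}(x)\big)$; (iii) $0\le z<y$, $\tilde z\in(-\tilde y,\tilde y)$ and $$p_{\tilde y,\tilde x}(\tilde z)\ge p_{y,x}(z)+\big(p_{0,-\tilde x}(\tilde y)-p_{0,-x}(y)\big)+\ln\frac{\tilde y-\tilde x}{y-x}-\Big(\big(p_{\tilde x,1}(\tilde y)-p_{x,1}(y)\big)-\big(p_{0,-1}(\tilde x)-p_{0,-1}(x)\big)\Big).$$ Then $p_{\tilde y,-\tilde y}(\tilde z)>p_{y,-y}(z)$.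
   Context: Poincaré coordinates: for real $p\neq q$ and $w$ strictly between $p$ and $q$ (the oriented open interval $(p,q)$, where $p>q$ is allowed), $p_{p,q}(w)=\ln\frac{w-p}{q-w}$. *)

theory Defs
  imports Complex_Main
begin

definition poinc :: "real \<Rightarrow> real \<Rightarrow> real \<Rightarrow> real" where
  "poinc p q w = ln ((w - p) / (q - w))"

end

theory Submission
  imports Defs
begin

(*
  Put a = -x and t = exp p_{y,-y}(z) = (y - z)/(y + z), so that t is in (0,1] because 0 <= z < y.
  Then exp p_{y,x}(z) = rho a y * 2t / mu a y t, where mu a y is affine in t with positive
  coefficients, and after exponentiation hypothesis (iii) reads t / mu a y t <= t' / mu a' y' t'.
  Hypothesis (i) says a < a' and (ii) says kappa a y <= kappa a' y'. The values of mu a y at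
  t = 0 and t = 1 are increasing functions of a and kappa a y, hence mu a y t < mu a' y' t on
  [0,1], so t / mu a' y' t < t' / mu a' y' t'. As s / mu a' y' s is increasing in s, t < t'.
*)

lemma exp_poinc:
  assumes "min p q < w" "w < max p q"
  shows "exp (poinc p q w) = (w - p) / (q - w)"
proof -
  have "0 < (w - p) / (q - w)"
    using assms by (cases "p < q") (auto simp: zero_less_divide_iff)
  then show ?thesis
    unfolding poinc_def by simp
qed

lemma poinc_symmetric: "poinc y (-y) z = ln ((y - z) / (y + z))"
  unfolding poinc_def using minus_divide_divide[of "y - z" "y + z"] by simp

lemma poinc_zero_neg_one_less_iff:
  assumes "-1 < x" "x < 0" "-1 < x'" "x' < 0"
  shows "poinc 0 (-1) x < poinc 0 (-1) x' \<longleftrightarrow> x' < x"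
proof -
  have "poinc 0 (-1) x < poinc 0 (-1) x' \<longleftrightarrow> exp (poinc 0 (-1) x) < exp (poinc 0 (-1) x')"
    by simp
  also have "\<dots> \<longleftrightarrow> x / (-1 - x) < x' / (-1 - x')"
    using assms by (simp add: exp_poinc)
  also have "\<dots> \<longleftrightarrow> x' < x"
    using assms by (simp add: divide_simps algebra_simps)
  finally show ?thesis .
qed

definition kappa :: "real \<Rightarrow> real \<Rightarrow> real" where
  "kappa a y = (y + a) * (1 - a) / ((1 - y) * a)"

lemma ln_kappa:
  assumes "-1 < x" "x < 0" "0 < y" "y < -x"
  shows "poinc x 1 y - poinc 0 (-1) x = ln (kappa (-x) y)"
proof -
  have "exp (poinc x 1 y - poinc 0 (-1) x) = kappa (-x) y"
    using assms by (simp add: exp_diff exp_poinc kappa_def divide_simps algebra_simps)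
  then show ?thesis
    by (metis ln_exp)
qed

lemma two_minus_kappa:
  assumes "y < 1" "0 < a"
  shows "2 - kappa a y = (a - y) * (1 + a) / ((1 - y) * a)"
  using assms unfolding kappa_def by (simp add: field_simps)

lemma kappa_pos_less_two:
  assumes "0 < y" "y < a" "a < 1"
  shows "0 < kappa a y" "kappa a y < 2"
proof -
  show "0 < kappa a y" using assms unfolding kappa_def by simp
  have "0 < 2 - kappa a y" using assms two_minus_kappa[of y a] by simp
  then show "kappa a y < 2" by simp
qed

definition rho :: "real \<Rightarrow> real \<Rightarrow> real" where
  "rho a y = y * a * (1 - y) / ((a - y) * (1 - a))"

lemma ln_rho:
  assumes "-1 < x" "x < 0" "0 < y" "y < -x"
  shows "poinc 0 (-x) y + ln (y - x) - poinc x 1 y + poinc 0 (-1) x = ln (rho (-x) y)"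
proof -
  have "exp (poinc 0 (-x) y + ln (y - x) - poinc x 1 y + poinc 0 (-1) x)
      = y / (-x - y) * (y - x) / ((y - x) / (1 - y)) * (x / (-1 - x))"
    using assms by (simp add: exp_add exp_diff exp_poinc)
  also have "\<dots> = rho (-x) y"
  proof -
    have cancel: "y / (-x - y) * (y - x) / ((y - x) / (1 - y)) = y / (-x - y) * (1 - y)"
      using assms by simp
    have flip: "x / (-1 - x) = (-x) / (1 + x)"
      using minus_divide_divide[of x "1 + x"] by simp
    show ?thesis
      unfolding cancel flip rho_def by simp
  qed
  finally show ?thesis
    by (metis ln_exp)
qed

definition mu :: "real \<Rightarrow> real \<Rightarrow> real \<Rightarrow> real" where
  "mu a y t = a * (1 - y) * ((a + y) + (a - y) * t) / ((a - y) * (1 - a))"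

lemma mu_pos:
  assumes "0 < y" "y < a" "a < 1" "0 \<le> t"
  shows "0 < mu a y t"
  using assms unfolding mu_def by (simp add: add_pos_nonneg)

lemma poinc_eq_ln_mu:
  assumes "-1 < x" "x < 0" "0 < y" "y < -x" "-y < z" "z < y"
  shows "poinc y x z = ln (rho (-x) y) + ln (2 * ((y - z) / (y + z)) / mu (-x) y ((y - z) / (y + z)))"
proof -
  define t where "t = (y - z) / (y + z)"
  have "0 < t"
    using assms unfolding t_def by simp
  have "0 < rho (-x) y"
    unfolding rho_def by (intro divide_pos_pos mult_pos_pos) (use assms in auto)
  have "exp (ln (rho (-x) y) + ln (2 * t / mu (-x) y t)) = rho (-x) y * (2 * t / mu (-x) y t)"
    using assms \<open>0 < t\<close> \<open>0 < rho (-x) y\<close> mu_pos[of y "-x" t] by (simp add: exp_add)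
  also have "\<dots> = 2 * y * t / ((-x + y) + (-x - y) * t)"
  proof -
    have "(-x + y) + (-x - y) * t > 0"
      using assms \<open>0 < t\<close> by (simp add: add_pos_nonneg)
    then show ?thesis
      using assms unfolding rho_def mu_def by (simp add: divide_simps)
  qed
  also have "\<dots> = (z - y) / (x - z)"
  proof -
    have "(-x + y) + (-x - y) * t = 2 * y * (z - x) / (y + z)"
      using assms unfolding t_def by (simp add: divide_simps) (simp add: algebra_simps)
    then show ?thesis
      using assms unfolding t_def by (simp add: divide_simps) (simp add: algebra_simps)
  qed
  also have "\<dots> = exp (poinc y x z)"
    using assms by (simp add: exp_poinc)
  finally show ?thesis
    unfolding t_def by (metis ln_exp)
qed

lemma divide_mu_less_iff:
  assumes "0 < y" "y < a" "a < 1" "0 \<le> s" "0 \<le> t"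
  shows "s / mu a y s < t / mu a y t \<longleftrightarrow> s < t"
proof -
  define C where "C = a * (1 - y) / ((a - y) * (1 - a))"
  have mu_C: "\<And>u. mu a y u = C * ((a + y) + (a - y) * u)"
    by (simp add: mu_def C_def)
  have "0 < C"
    using assms unfolding C_def by simp
  have "s / mu a y s < t / mu a y t \<longleftrightarrow> s * mu a y t < t * mu a y s"
    using assms mu_pos[of y a] by (simp add: divide_simps)
  also have "\<dots> \<longleftrightarrow> C * (s * (a + y)) < C * (t * (a + y))"
    by (simp add: mu_C algebra_simps)
  also have "\<dots> \<longleftrightarrow> s < t"
    using assms \<open>0 < C\<close> by simp
  finally show ?thesis .
qed

lemma mu_affine: "mu a y t = (1 - t) * mu a y 0 + t * mu a y 1"
proof (cases "a = y \<or> a = 1")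
  case False
  then have "a - y \<noteq> 0" "1 - a \<noteq> 0" by auto
  then show ?thesis unfolding mu_def by (simp add: divide_simps) (simp add: algebra_simps)
qed (auto simp: mu_def)

lemma mu_one_eq:
  assumes "0 < y" "y < a" "a < 1"
  shows "mu a y 1 = 2 * (a * (1 + a) / (1 - a)) / (2 - kappa a y)"
proof -
  have nz: "a \<noteq> 0" "1 - a \<noteq> 0" "1 - y \<noteq> 0" "a - y \<noteq> 0" "1 + a \<noteq> 0"
    using assms by auto
  have "2 - kappa a y = (a - y) * (1 + a) / ((1 - y) * a)"
    using assms by (simp add: two_minus_kappa)
  then show ?thesis
    using nz kappa_pos_less_two[OF assms] by (simp add: mu_def divide_simps) (simp add: algebra_simps)
qed

lemma mu_zero_eq:
  assumes "0 < y" "y < a" "a < 1"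
  shows "mu a y 0 = (1 + a)^2 / (1 - a) / (2 - kappa a y) * (kappa a y / ((1 - a) / a + kappa a y))"
proof -
  have nz: "a \<noteq> 0" "1 - a \<noteq> 0" "1 - y \<noteq> 0" "a - y \<noteq> 0" "1 + a \<noteq> 0"
    using assms by auto
  have "(1 - a) / a + kappa a y = (1 - a) * (1 + a) / ((1 - y) * a)"
    using nz unfolding kappa_def by (simp add: field_simps)
  then have ratio: "kappa a y / ((1 - a) / a + kappa a y) = (y + a) / (1 + a)"
    using nz unfolding kappa_def by (simp add: divide_simps)
  have gap: "2 - kappa a y = (a - y) * (1 + a) / ((1 - y) * a)"
    using assms by (simp add: two_minus_kappa)
  show ?thesis
    unfolding ratio gap using nz by (simp add: mu_def divide_simps power2_eq_square)
qed

lemma mu_one_less: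
  assumes "0 < y" "y < a" "a < A" "A < 1" "0 < Y" "Y < A" "kappa a y \<le> kappa A Y"
  shows "mu a y 1 < mu A Y 1"
proof -
  have "a * (1 + a) / (1 - a) < A * (1 + A) / (1 - A)"
    using assms by (intro frac_less mult_strict_mono) auto
  then have "2 * (a * (1 + a) / (1 - a)) / (2 - kappa a y) < 2 * (A * (1 + A) / (1 - A)) / (2 - kappa A Y)"
    using assms kappa_pos_less_two[of Y A] by (intro frac_less) auto
  then show ?thesis
    using assms by (simp add: mu_one_eq)
qed

lemma mu_zero_less:
  assumes "0 < y" "y < a" "a < A" "A < 1" "0 < Y" "Y < A" "kappa a y \<le> kappa A Y"
  shows "mu a y 0 < mu A Y 0"
proof -
  define k where "k = kappa a y"
  define k' where "k' = kappa A Y"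
  define c where "c = (1 - a) / a"
  define c' where "c' = (1 - A) / A"
  have k: "0 < k" "k \<le> k'" "k' < 2"
    using assms kappa_pos_less_two[of y a] kappa_pos_less_two[of Y A] unfolding k_def k'_def by auto
  have c: "0 < c'" "c' < c"
    using assms unfolding c_def c'_def by (auto intro: frac_less2)
  have growth: "(1 + a)^2 / (1 - a) < (1 + A)^2 / (1 - A)"
    using assms by (intro frac_less power_strict_mono) auto
  have first: "(1 + a)^2 / (1 - a) / (2 - k) < (1 + A)^2 / (1 - A) / (2 - k')"
    by (rule frac_less[OF _ growth]) (use assms k in auto)
  have "k * c \<le> k' * c"
    using k c by (intro mult_right_mono) auto
  then have "k / (c + k) \<le> k' / (c + k')"
    using k c by (simp add: divide_simps algebra_simps)
  also have "\<dots> \<le> k' / (c' + k')"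
    using k c by (intro divide_left_mono) auto
  finally have second: "k / (c + k) \<le> k' / (c' + k')" .
  have "(1 + a)^2 / (1 - a) / (2 - k) * (k / (c + k)) < (1 + A)^2 / (1 - A) / (2 - k') * (k' / (c' + k'))"
    using first second k c assms by (intro mult_less_le_imp_less) auto
  then show ?thesis
    using assms by (simp add: mu_zero_eq k_def k'_def c_def c'_def)
qed

lemma mu_less:
  assumes "0 < y" "y < a" "a < A" "A < 1" "0 < Y" "Y < A" "kappa a y \<le> kappa A Y"
    and "0 \<le> t" "t \<le> 1"
  shows "mu a y t < mu A Y t"
proof -
  have zero: "mu a y 0 < mu A Y 0" and one: "mu a y 1 < mu A Y 1"
    using mu_zero_less[OF assms(1-7)] mu_one_less[OF assms(1-7)] .
  have "(1 - t) * mu a y 0 + t * mu a y 1 < (1 - t) * mu A Y 0 + t * mu A Y 1"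
  proof (cases "t = 1")
    case False
    then have "(1 - t) * mu a y 0 < (1 - t) * mu A Y 0" "t * mu a y 1 \<le> t * mu A Y 1"
      using zero one assms(8,9) by (auto intro: mult_left_mono)
    then show ?thesis by linarith
  qed (use one in simp)
  then show ?thesis
    by (metis mu_affine)
qed

theorem lemma4p1:
  fixes x y z x' y' z' :: real
  assumes hx: "x \<in> {-1<..<0}" and hx': "x' \<in> {-1<..<0}"
    and h1: "poinc 0 (-1) x' > poinc 0 (-1) x"
    and hy: "y \<in> {0<..<-x}" and hy': "y' \<in> {0<..<-x'}"
    and h2: "poinc x' 1 y' \<ge> poinc x 1 y + (poinc 0 (-1) x' - poinc 0 (-1) x)"
    and hz: "0 \<le> z" "z < y" and hz': "z' \<in> {-y'<..<y'}"
    and h3: "poinc y' x' z' \<ge> poinc y x z + (poinc 0 (-x') y' - poinc 0 (-x) y)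
              + ln ((y' - x') / (y - x))
              - ((poinc x' 1 y' - poinc x 1 y) - (poinc 0 (-1) x' - poinc 0 (-1) x))"
  shows "poinc y' (-y') z' > poinc y (-y) z"
proof -
  have x: "-1 < x" "x < 0" "0 < y" "y < -x" and x': "-1 < x'" "x' < 0" "0 < y'" "y' < -x'"
    using hx hx' hy hy' by auto
  have "-x < -x'"
    using h1 poinc_zero_neg_one_less_iff x x' by auto
  have "ln (kappa (-x) y) \<le> ln (kappa (-x') y')"
    using h2 ln_kappa[OF x] ln_kappa[OF x'] by linarith
  then have kappa: "kappa (-x) y \<le> kappa (-x') y'"
    using kappa_pos_less_two x x' by simp
  define t where "t = (y - z) / (y + z)"
  define t' where "t' = (y' - z') / (y' + z')"
  have t: "0 < t" "t \<le> 1" and "0 < t'"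
    using hz hz' x unfolding t_def t'_def by (auto simp: divide_simps)
  have "ln (y' - x') - ln (y - x) = ln ((y' - x') / (y - x))"
    using x x' by (simp add: ln_div)
  then have "ln (2 * t / mu (-x) y t) \<le> ln (2 * t' / mu (-x') y' t')"
    using h3 ln_rho[OF x] ln_rho[OF x'] poinc_eq_ln_mu[OF x] poinc_eq_ln_mu[OF x'] hz hz'
    unfolding t_def t'_def by auto
  then have "t / mu (-x) y t \<le> t' / mu (-x') y' t'"
    using x x' t \<open>0 < t'\<close> mu_pos[of y "-x"] mu_pos[of y' "-x'"] by (simp add: divide_simps)
  moreover have "t / mu (-x') y' t < t / mu (-x) y t"
    using mu_less[OF _ _ \<open>-x < -x'\<close> _ _ _ kappa] mu_pos[of y "-x"] mu_pos[of y' "-x'"] x x' t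
    by (intro divide_strict_left_mono mult_pos_pos) auto
  ultimately have "t < t'"
    using divide_mu_less_iff[of y' "-x'" t t'] x' t \<open>0 < t'\<close> by auto
  then show ?thesis
    using t unfolding poinc_symmetric t_def t'_def by simp
qed

end
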